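(* Let $n$ be an odd positive integer with $\Phi(n)=\mathcal{F}(n)$. Then $n\in\mathfrak{G}$, i.e. $\sum_{z\in\mathcal{G}_n} z^{\mathcal{F}(n)}\equiv \mathcal{F}(n)\pmod n$ in $\mathbb{Z}[i]/n\mathbb{Z}[i]$.
   Context: For a positive integer $n$, $\mathcal{G}_n=\{a+bi\in\mathbb{Z}[i]/n\mathbb{Z}[i] : a^2+b^2\equiv 1\pmod n\}$ and $\Phi(n)=|\mathcal{G}_n|$. The function $\mathcal{F}$ is defined by $\mathcal{F}(n)=n-1$ if $n\equiv 1\pmod 4$, $\mathcal{F}(n)=n+1$ if $n\equiv 3 \pmod 4$, $\mathcal{F}(n)=n$ otherwise. $\mathfrak{G}=\{n\in\mathbb{N} : \sum_{z\in\mathcal{G}_n} z^{\mathcal{F}(n)}\equiv \mathcal{F}(n)\pmod n\}$. *)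

theory Defs
  imports "HOL-Number_Theory.Number_Theory"
begin

text \<open>The ring Z[i]/nZ[i] is modelled by the representatives (a, b) with 0 \<le> a, b < n,
  and congruence modulo n in Z[i] is componentwise congruence modulo n.\<close>

fun gmul :: "int \<times> int \<Rightarrow> int \<times> int \<Rightarrow> int \<times> int" where
  "gmul (a, b) (c, d) = (a * c - b * d, a * d + b * c)"

fun gpow :: "int \<times> int \<Rightarrow> nat \<Rightarrow> int \<times> int" where
  "gpow z 0 = (1, 0)"
| "gpow z (Suc k) = gmul z (gpow z k)"

definition gcong :: "int \<times> int \<Rightarrow> int \<times> int \<Rightarrow> nat \<Rightarrow> bool" where
  "gcong z w n \<longleftrightarrow> [fst z = fst w] (mod int n) \<and> [snd z = snd w] (mod int n)"

definition Gset :: "nat \<Rightarrow> (int \<times> int) set" where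
  "Gset n = {(a, b). 0 \<le> a \<and> a < int n \<and> 0 \<le> b \<and> b < int n \<and> [a^2 + b^2 = 1] (mod int n)}"

definition PhiG :: "nat \<Rightarrow> nat" where
  "PhiG n = card (Gset n)"

definition FF :: "nat \<Rightarrow> nat" where
  "FF n = (if n mod 4 = 1 then n - 1 else if n mod 4 = 3 then n + 1 else n)"

definition gsum :: "(int \<times> int) set \<Rightarrow> (int \<times> int \<Rightarrow> int \<times> int) \<Rightarrow> int \<times> int" where
  "gsum A f = ((\<Sum>z\<in>A. fst (f z)), (\<Sum>z\<in>A. snd (f z)))"

definition in_frakG :: "nat \<Rightarrow> bool" where
  "in_frakG n \<longleftrightarrow> gcong (gsum (Gset n) (\<lambda>z. gpow z (FF n))) (int (FF n), 0) n"

end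

theory Submission
  imports Defs "HOL-Algebra.Multiplicative_Group"
begin

text \<open>Reduction modulo n makes the norm-one residues G_n a finite group under Gaussian
  multiplication, so z^\<Phi>(n) = 1 for every z in G_n by Lagrange's theorem and the sum
  of the \<Phi>(n) terms is \<Phi>(n). Hence \<Phi>(n) = F(n) alone gives n in \<frakG>.\<close>

definition gnorm :: "int \<times> int \<Rightarrow> int" where
  "gnorm z = fst z ^ 2 + snd z ^ 2"

definition gmod :: "int \<Rightarrow> int \<times> int \<Rightarrow> int \<times> int" where
  "gmod N z = (fst z mod N, snd z mod N)"

lemma gmul_commute: "gmul z w = gmul w z"
  by (cases z; cases w) (simp add: algebra_simps)

lemma gmul_assoc: "gmul (gmul x y) z = gmul x (gmul y z)"
  by (cases x; cases y; cases z) (simp add: algebra_simps)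

lemma gmul_one_left [simp]: "gmul (1, 0) z = z"
  by (cases z) simp

lemma gnorm_gmul: "gnorm (gmul z w) = gnorm z * gnorm w"
  by (cases z; cases w) (simp add: gnorm_def algebra_simps power2_eq_square)

lemma gmod_gmod [simp]: "gmod N (gmod N z) = gmod N z"
  by (simp add: gmod_def)

lemma gmod_gmul_left: "gmod N (gmul (gmod N z) w) = gmod N (gmul z w)"
proof -
  obtain a b c d where z: "z = (a, b)" and w: "w = (c, d)" by fastforce
  have "[a mod N * c - b mod N * d = a * c - b * d] (mod N)"
    by (intro cong_diff cong_mult cong_refl) (simp_all add: cong_def)
  moreover have "[a mod N * d + b mod N * c = a * d + b * c] (mod N)"
    by (intro cong_add cong_mult cong_refl) (simp_all add: cong_def)
  ultimately show ?thesis by (simp add: z w gmod_def cong_def)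
qed

lemma gmod_gmul_right: "gmod N (gmul z (gmod N w)) = gmod N (gmul z w)"
  by (metis gmul_commute gmod_gmul_left)

lemma gnorm_gmod: "[gnorm (gmod N z) = gnorm z] (mod N)"
  unfolding gnorm_def gmod_def by (intro cong_add cong_pow) (simp_all add: cong_def)

lemma gcong_iff_gmod_eq: "gcong z w n \<longleftrightarrow> gmod (int n) z = gmod (int n) w"
  by (simp add: gcong_def gmod_def cong_def prod_eq_iff)

lemma Gset_iff:
  assumes "n > 0"
  shows "z \<in> Gset n \<longleftrightarrow> gmod (int n) z = z \<and> [gnorm z = 1] (mod int n)"
proof -
  have "(0 \<le> a \<and> a < int n) \<longleftrightarrow> a mod int n = a" for a
    using assms by (metis of_nat_0_less_iff pos_mod_bound pos_mod_sign mod_pos_pos_trivial)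
  then show ?thesis by (cases z) (auto simp: Gset_def gmod_def gnorm_def)
qed

lemma gmod_in_Gset:
  assumes "n > 0" and "[gnorm z = 1] (mod int n)"
  shows "gmod (int n) z \<in> Gset n"
  using assms cong_trans[OF gnorm_gmod] by (simp add: Gset_iff)

definition norm_one_group :: "nat \<Rightarrow> (int \<times> int) monoid" where
  "norm_one_group n =
     \<lparr>carrier = Gset n, mult = (\<lambda>z w. gmod (int n) (gmul z w)), one = gmod (int n) (1, 0)\<rparr>"

lemma group_norm_one_group:
  assumes "n > 0"
  shows "group (norm_one_group n)"
proof (rule groupI)
  fix x y assume "x \<in> carrier (norm_one_group n)" "y \<in> carrier (norm_one_group n)"
  then have "[gnorm x * gnorm y = 1 * 1] (mod int n)"
    using assms by (intro cong_mult) (simp_all add: norm_one_group_def Gset_iff)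
  then show "x \<otimes>\<^bsub>norm_one_group n\<^esub> y \<in> carrier (norm_one_group n)"
    using assms by (simp add: norm_one_group_def gmod_in_Gset gnorm_gmul)
next
  show "\<one>\<^bsub>norm_one_group n\<^esub> \<in> carrier (norm_one_group n)"
    using assms by (simp add: norm_one_group_def gmod_in_Gset gnorm_def)
next
  fix x y z
  show "x \<otimes>\<^bsub>norm_one_group n\<^esub> y \<otimes>\<^bsub>norm_one_group n\<^esub> z =
        x \<otimes>\<^bsub>norm_one_group n\<^esub> (y \<otimes>\<^bsub>norm_one_group n\<^esub> z)"
    by (simp add: norm_one_group_def gmod_gmul_left gmod_gmul_right gmul_assoc)
next
  fix x assume "x \<in> carrier (norm_one_group n)"
  then show "\<one>\<^bsub>norm_one_group n\<^esub> \<otimes>\<^bsub>norm_one_group n\<^esub> x = x"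
    using assms by (simp add: norm_one_group_def gmod_gmul_left Gset_iff)
next
  fix x assume "x \<in> carrier (norm_one_group n)"
  then have x: "x \<in> Gset n" by (simp add: norm_one_group_def)
  obtain a b where xe: "x = (a, b)" by fastforce
  have norm_x: "[gnorm x = 1] (mod int n)" using x assms Gset_iff by blast
  \<comment> \<open>The inverse of a norm-one element is its conjugate.\<close>
  define y where "y = gmod (int n) (a, - b)"
  have "y \<in> Gset n"
    using assms norm_x by (simp add: y_def xe gmod_in_Gset gnorm_def)
  moreover have "gmod (int n) (gmul y x) = gmod (int n) (gnorm x, 0)"
    by (simp add: y_def gmod_gmul_left xe gnorm_def power2_eq_square algebra_simps)
  moreover have "\<dots> = gmod (int n) (1, 0)"
    using norm_x by (simp add: gmod_def cong_def)
  ultimately show "\<exists>y\<in>carrier (norm_one_group n). y \<otimes>\<^bsub>norm_one_group n\<^esub> x = \<one>\<^bsub>norm_one_group n\<^esub>"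
    by (auto simp: norm_one_group_def)
qed

lemma gmod_gpow_eq_pow:
  assumes "n > 0" and "z \<in> Gset n"
  shows "gmod (int n) (gpow z k) = z [^]\<^bsub>norm_one_group n\<^esub> k"
proof (induction k)
  case 0
  then show ?case by (simp add: norm_one_group_def)
next
  case (Suc k)
  have "gmod (int n) (gpow z (Suc k)) = gmod (int n) (gmul (gmod (int n) (gpow z k)) z)"
    by (simp add: gmod_gmul_left gmul_commute[of z])
  also have "\<dots> = z [^]\<^bsub>norm_one_group n\<^esub> k \<otimes>\<^bsub>norm_one_group n\<^esub> z"
    using Suc by (simp add: norm_one_group_def)
  finally show ?case by simp
qed

lemma gpow_PhiG_gcong_one:
  assumes "n > 0" and "z \<in> Gset n"
  shows "gcong (gpow z (PhiG n)) (1, 0) n"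
proof -
  interpret group "norm_one_group n" using group_norm_one_group assms(1) .
  have "gmod (int n) (gpow z (PhiG n)) = z [^]\<^bsub>norm_one_group n\<^esub> order (norm_one_group n)"
    using gmod_gpow_eq_pow[OF assms] by (simp add: order_def norm_one_group_def PhiG_def)
  also have "\<dots> = gmod (int n) (1, 0)"
    using pow_order_eq_1 assms(2) by (simp add: norm_one_group_def)
  finally show ?thesis by (simp add: gcong_iff_gmod_eq)
qed

lemma gsum_gpow_PhiG_gcong:
  assumes "n > 0"
  shows "gcong (gsum (Gset n) (\<lambda>z. gpow z (PhiG n))) (int (PhiG n), 0) n"
proof -
  have one: "[fst (gpow z (PhiG n)) = 1] (mod int n)" and zero: "[snd (gpow z (PhiG n)) = 0] (mod int n)"
    if "z \<in> Gset n" for z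
    using gpow_PhiG_gcong_one[OF assms that] by (simp_all add: gcong_def)
  have "[(\<Sum>z\<in>Gset n. fst (gpow z (PhiG n))) = (\<Sum>z\<in>Gset n. 1)] (mod int n)"
    using one by (rule cong_sum)
  moreover have "[(\<Sum>z\<in>Gset n. snd (gpow z (PhiG n))) = (\<Sum>z\<in>Gset n. 0)] (mod int n)"
    using zero by (rule cong_sum)
  ultimately show ?thesis by (simp add: gcong_def gsum_def PhiG_def)
qed

theorem mainTheorem15:
  fixes n :: nat
  assumes "n > 0" and "odd n" and "PhiG n = FF n"
  shows "in_frakG n"
  using gsum_gpow_PhiG_gcong[OF assms(1)] assms(3) by (simp add: in_frakG_def)

end
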